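(* Let $N,\ell$ be positive integers, let $E_1,\dots,E_N>0$ and $0<\kappa\le 1$, and set $g_j=\frac{\kappa E_j}{\sum_{i=1}^N E_i}$ for $j=1,\dots,N$. Let $\Phi\in\mathbb{R}^{\ell\times N}$ be a random matrix with independent entries, where $\Phi_{ij}=\sqrt{1/g_j}$ with probability $g_j/2$, $\Phi_{ij}=0$ with probability $1-g_j$, and $\Phi_{ij}=-\sqrt{1/g_j}$ with probability $g_j/2$. For vectors $u,v\in\mathbb{R}^N$ define $x=\frac{1}{\sqrt{\ell}}\Phi u$ and $y=\frac{1}{\sqrt{\ell}}\Phi v\in\mathbb{R}^\ell$. Then $$\mathbb{E}[x^Ty]=u^Tv$$ and $$\mathrm{Var}(x^Ty)=\frac{1}{\ell}\Big((u^Tv)^2+\|u\|_2^2\|v\|_2^2+\sum_{j=1}^N\frac{1}{g_j}u_j^2v_j^2-3\sum_{j=1}^N u_j^2v_j^2\Big).$$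
   Context: $E_j$ is the energy harvested by sensor node $j$ and $\kappa$ is a sampling parameter; $g_j$ is the probability that entry $(i,j)$ of the projection matrix is nonzero. *)

theory Defs
  imports "HOL-Probability.Probability"
begin

definition entry_pmf :: "real \<Rightarrow> real pmf" where
  "entry_pmf g = pmf_of_list [(sqrt (1 / g), g / 2), (0, 1 - g), (- sqrt (1 / g), g / 2)]"

text \<open>g_j = kappa E_j / sum_i E_i, indices 0-based: j < N.\<close>
definition gprob :: "nat \<Rightarrow> (nat \<Rightarrow> real) \<Rightarrow> real \<Rightarrow> nat \<Rightarrow> real" where
  "gprob N E \<kappa> j = \<kappa> * E j / (\<Sum>i<N. E i)"

text \<open>The random l x N matrix Phi with independent entries, as a function on index pairs
  (i,j) with i < l, j < N (value 0 outside).\<close>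
definition Phi_pmf :: "nat \<Rightarrow> nat \<Rightarrow> (nat \<Rightarrow> real) \<Rightarrow> real \<Rightarrow> (nat \<times> nat \<Rightarrow> real) pmf" where
  "Phi_pmf l N E \<kappa> = Pi_pmf ({..<l} \<times> {..<N}) 0 (\<lambda>(i, j). entry_pmf (gprob N E \<kappa> j))"

definition proj :: "nat \<Rightarrow> nat \<Rightarrow> (nat \<times> nat \<Rightarrow> real) \<Rightarrow> (nat \<Rightarrow> real) \<Rightarrow> nat \<Rightarrow> real" where
  "proj l N \<Phi> u i = (1 / sqrt (real l)) * (\<Sum>j<N. \<Phi> (i, j) * u j)"

end

theory Submission
  imports Defs
begin

text \<open>Only moments of order at most four of the independent entries enter: each entry has
  mean 0, variance 1 and fourth moment 1/g. Writing x^T y and (x^T y)^2 as sums of products of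
  entries of Phi, the expectation of a product of four entries is the number of ways of pairing
  the four indices into equal pairs, plus the excess kurtosis 1/g - 3 when all four coincide.
  Summing these moments against the coefficients u_j v_k u_m v_n gives the two formulas.\<close>

lemma expectation_component_Pi_pmf:
  fixes f :: "'b \<Rightarrow> real"
  assumes "finite A" "x \<in> A"
  shows "measure_pmf.expectation (Pi_pmf A dflt p) (\<lambda>y. f (y x)) = measure_pmf.expectation (p x) f"
    and "integrable (p x) f \<Longrightarrow> integrable (Pi_pmf A dflt p) (\<lambda>y. f (y x))"
proof -
  have component: "p x = map_pmf (\<lambda>y. y x) (Pi_pmf A dflt p)"
    using Pi_pmf_component[OF assms(1), of x dflt p] assms(2) by simp
  show "measure_pmf.expectation (Pi_pmf A dflt p) (\<lambda>y. f (y x)) = measure_pmf.expectation (p x) f"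
    by (subst component) simp
  show "integrable (p x) f \<Longrightarrow> integrable (Pi_pmf A dflt p) (\<lambda>y. f (y x))"
    by (subst (asm) component) simp
qed

lemma expectation_prod_Pi_pmf_integrable:
  fixes f :: "'a \<Rightarrow> 'b \<Rightarrow> real"
  assumes "finite A" and "\<And>x. x \<in> A \<Longrightarrow> integrable (measure_pmf (p x)) (f x)"
  shows "measure_pmf.expectation (Pi_pmf A dflt p) (\<lambda>y. \<Prod>x\<in>A. f x (y x)) =
           (\<Prod>x\<in>A. measure_pmf.expectation (p x) (f x))"
proof -
  have "prob_space.indep_vars (Pi_pmf A dflt p) (\<lambda>_. borel) (\<lambda>x y. f x (y x)) A"
    by (rule prob_space.indep_vars_compose2[OF measure_pmf.prob_space_axioms
          indep_vars_Pi_pmf[OF assms(1)]]) simp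
  then have "measure_pmf.expectation (Pi_pmf A dflt p) (\<lambda>y. \<Prod>x\<in>A. f x (y x)) =
      (\<Prod>x\<in>A. measure_pmf.expectation (Pi_pmf A dflt p) (\<lambda>y. f x (y x)))"
    using assms
    by (intro prob_space.indep_vars_lebesgue_integral[OF measure_pmf.prob_space_axioms])
       (auto intro: expectation_component_Pi_pmf(2)[OF assms(1)])
  also have "\<dots> = (\<Prod>x\<in>A. measure_pmf.expectation (p x) (f x))"
    using assms(1) by (intro prod.cong refl expectation_component_Pi_pmf)
  finally show ?thesis .
qed

lemma prod_list_map_eq_prod_count_list:
  "prod_list (map f xs) = (\<Prod>x\<in>set xs. (f x :: 'a :: comm_monoid_mult) ^ count_list xs x)"
  by (simp flip: prod_mset_prod_list add: image_prod_mset_multiplicity count_mset)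

lemma expectation_prod_list_Pi_pmf:
  fixes p :: "'a \<Rightarrow> real pmf"
  assumes "finite A" "set xs \<subseteq> A" and "\<And>x. x \<in> A \<Longrightarrow> finite (set_pmf (p x))"
  shows "measure_pmf.expectation (Pi_pmf A dflt p) (\<lambda>y. prod_list (map y xs)) =
           (\<Prod>x\<in>set xs. measure_pmf.expectation (p x) (\<lambda>t. t ^ count_list xs x))"
proof -
  have "prod_list (map y xs) = (\<Prod>x\<in>A. y x ^ count_list xs x)" for y :: "'a \<Rightarrow> real"
    unfolding prod_list_map_eq_prod_count_list
    by (rule prod.mono_neutral_left) (use assms(1,2) in \<open>auto simp: count_list_0_iff\<close>)
  then have "measure_pmf.expectation (Pi_pmf A dflt p) (\<lambda>y. prod_list (map y xs)) =
          (\<Prod>x\<in>A. measure_pmf.expectation (p x) (\<lambda>t. t ^ count_list xs x))"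
    using assms by (simp only:) (intro expectation_prod_Pi_pmf_integrable integrable_measure_pmf_finite)
  also have "\<dots> = (\<Prod>x\<in>set xs. measure_pmf.expectation (p x) (\<lambda>t. t ^ count_list xs x))"
    using assms(1,2) by (intro prod.mono_neutral_right) (auto simp: count_list_0_iff)
  finally show ?thesis .
qed

lemma expectation_pair_Pi_pmf:
  fixes p :: "'a \<Rightarrow> real pmf"
  assumes "finite A" "a \<in> A" "b \<in> A" and "\<And>x. x \<in> A \<Longrightarrow> finite (set_pmf (p x))"
    and centered: "\<And>x. x \<in> A \<Longrightarrow> measure_pmf.expectation (p x) (\<lambda>t. t) = 0"
    and normalized: "\<And>x. x \<in> A \<Longrightarrow> measure_pmf.expectation (p x) (\<lambda>t. t\<^sup>2) = 1"
  shows "measure_pmf.expectation (Pi_pmf A dflt p) (\<lambda>y. y a * y b) = (if a = b then 1 else 0)"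
proof -
  have "measure_pmf.expectation (Pi_pmf A dflt p) (\<lambda>y. y a * y b) =
          (\<Prod>x\<in>set [a, b]. measure_pmf.expectation (p x) (\<lambda>t. t ^ count_list [a, b] x))"
    using assms(1-4) by (subst expectation_prod_list_Pi_pmf[symmetric]) auto
  then show ?thesis
    using centered normalized assms(2,3) by (cases "a = b") (simp_all add: eval_nat_numeral)
qed

text \<open>Isserlis' rule for independent standardized entries, corrected on the diagonal
  by the excess kurtosis.\<close>

lemma expectation_fourfold_Pi_pmf:
  fixes p :: "'a \<Rightarrow> real pmf"
  assumes "finite A" "a \<in> A" "b \<in> A" "c \<in> A" "d \<in> A"
    and "\<And>x. x \<in> A \<Longrightarrow> finite (set_pmf (p x))"
    and centered: "\<And>x. x \<in> A \<Longrightarrow> measure_pmf.expectation (p x) (\<lambda>t. t) = 0"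
    and normalized: "\<And>x. x \<in> A \<Longrightarrow> measure_pmf.expectation (p x) (\<lambda>t. t\<^sup>2) = 1"
  shows "measure_pmf.expectation (Pi_pmf A dflt p) (\<lambda>y. y a * y b * y c * y d) =
           (if a = b \<and> c = d then 1 else 0) + (if a = c \<and> b = d then 1 else 0)
           + (if a = d \<and> b = c then 1 else 0)
           + (if a = b \<and> b = c \<and> c = d then measure_pmf.expectation (p a) (\<lambda>t. t ^ 4) - 3 else 0)"
proof -
  have "measure_pmf.expectation (Pi_pmf A dflt p) (\<lambda>y. y a * y b * y c * y d) =
          (\<Prod>x\<in>set [a, b, c, d]. measure_pmf.expectation (p x) (\<lambda>t. t ^ count_list [a, b, c, d] x))"
    using assms(1-6) by (subst expectation_prod_list_Pi_pmf[symmetric]) (auto simp: mult.assoc)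
  then show ?thesis
    using centered normalized assms(2-5)
    by (cases "a = b"; cases "a = c"; cases "a = d"; cases "b = c"; cases "b = d"; cases "c = d")
       (simp_all add: insert_commute eval_nat_numeral)
qed

lemma expectation_entry_pmf:
  assumes "0 < g" "g \<le> 1"
  shows "measure_pmf.expectation (entry_pmf g) f =
           g / 2 * f (sqrt (1 / g)) + (1 - g) * f 0 + g / 2 * f (- sqrt (1 / g))"
proof -
  define s where "s = sqrt (1 / g)"
  have "s > 0" using assms by (simp add: s_def)
  have wf: "pmf_of_list_wf [(s, g / 2), (0, 1 - g), (- s, g / 2)]"
    using assms by (intro pmf_of_list_wfI) auto
  have "measure_pmf.expectation (entry_pmf g) f = (\<Sum>t\<in>{s, 0, - s}. f t * pmf (entry_pmf g) t)"
    using set_pmf_of_list[OF wf] by (intro integral_measure_pmf_real) (auto simp: entry_pmf_def s_def)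
  also have "\<dots> = f s * (g / 2) + f 0 * (1 - g) + f (- s) * (g / 2)"
    using \<open>s > 0\<close> by (simp add: entry_pmf_def flip: s_def add: pmf_pmf_of_list[OF wf])
  finally show ?thesis by (simp add: s_def algebra_simps)
qed

lemma finite_set_entry_pmf:
  assumes "0 < g" "g \<le> 1"
  shows "finite (set_pmf (entry_pmf g))"
proof -
  have "pmf_of_list_wf [(sqrt (1 / g), g / 2), (0, 1 - g), (- sqrt (1 / g), g / 2)]"
    using assms by (intro pmf_of_list_wfI) auto
  then have "set_pmf (entry_pmf g) \<subseteq> {sqrt (1 / g), 0, - sqrt (1 / g)}"
    unfolding entry_pmf_def by (auto dest: set_pmf_of_list[THEN subsetD])
  then show ?thesis
    by (rule finite_subset) simp
qed

lemma moments_entry_pmf: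
  assumes "0 < g" "g \<le> 1"
  shows "measure_pmf.expectation (entry_pmf g) (\<lambda>t. t) = 0"
    and "measure_pmf.expectation (entry_pmf g) (\<lambda>t. t\<^sup>2) = 1"
    and "measure_pmf.expectation (entry_pmf g) (\<lambda>t. t ^ 4) = 1 / g"
proof -
  have "sqrt (1 / g) ^ 4 = (sqrt (1 / g) ^ 2) ^ 2"
    by (simp flip: power_mult)
  also have "\<dots> = (1 / g)\<^sup>2"
    using assms by simp
  finally have fourth: "sqrt (1 / g) ^ 4 = (1 / g)\<^sup>2" .
  show "measure_pmf.expectation (entry_pmf g) (\<lambda>t. t) = 0"
       "measure_pmf.expectation (entry_pmf g) (\<lambda>t. t\<^sup>2) = 1"
       "measure_pmf.expectation (entry_pmf g) (\<lambda>t. t ^ 4) = 1 / g"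
    using assms by (simp_all add: expectation_entry_pmf fourth power2_eq_square)
qed

lemma sum_proj_mult_proj:
  "(\<Sum>i<l. proj l N \<Phi> u i * proj l N \<Phi> v i) =
     1 / real l * (\<Sum>i<l. \<Sum>j<N. \<Sum>k<N. u j * v k * (\<Phi> (i, j) * \<Phi> (i, k)))"
proof -
  have "1 / sqrt (real l) * a * (1 / sqrt (real l) * b) = 1 / real l * (a * b)" for a b
    by (cases "l = 0") (simp_all add: field_simps)
  then show ?thesis
    unfolding proj_def by (simp only: sum_product) (simp add: sum_distrib_left mult_ac)
qed

lemma sum_fourfold_weights:
  fixes u v w :: "nat \<Rightarrow> real"
  shows "(\<Sum>i<l. \<Sum>i'<l. \<Sum>j<N. \<Sum>m<N. \<Sum>k<N. \<Sum>n<N. u j * v k * u m * v n *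
            ((if j = k \<and> m = n then 1 else 0) + (if i = i' \<and> j = m \<and> k = n then 1 else 0)
             + (if i = i' \<and> j = n \<and> k = m then 1 else 0)
             + (if i = i' \<and> j = k \<and> j = m \<and> j = n then w j else 0))) =
         (real l)\<^sup>2 * (\<Sum>j<N. u j * v j)\<^sup>2
         + real l * ((\<Sum>j<N. (u j)\<^sup>2) * (\<Sum>j<N. (v j)\<^sup>2) + (\<Sum>j<N. u j * v j)\<^sup>2
                     + (\<Sum>j<N. w j * (u j)\<^sup>2 * (v j)\<^sup>2))"
proof -
  have nest: "(if P \<and> Q then x else 0) = (if P then if Q then x else 0 else (0::real))" for P Q x
    by simp
  have const: "(\<Sum>x\<in>A. if P then f x else 0) = (if P then sum f A else (0::real))" for P A f
    by simp
  note sum_simps = if_distrib[where f="\<lambda>x. _ * x"] nest const power2_eq_square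
    sum_distrib_left sum_distrib_right mult_ac
  have "(\<Sum>i<l. \<Sum>i'<l. \<Sum>j<N. \<Sum>m<N. \<Sum>k<N. \<Sum>n<N.
            u j * v k * u m * v n * (if j = k \<and> m = n then 1 else 0)) = (real l)\<^sup>2 * (\<Sum>j<N. u j * v j)\<^sup>2"
    by (simp add: sum_simps cong: if_cong)
  moreover have "(\<Sum>i<l. \<Sum>i'<l. \<Sum>j<N. \<Sum>m<N. \<Sum>k<N. \<Sum>n<N.
            u j * v k * u m * v n * (if i = i' \<and> j = m \<and> k = n then 1 else 0)) =
          real l * ((\<Sum>j<N. (u j)\<^sup>2) * (\<Sum>j<N. (v j)\<^sup>2))"
    by (simp add: sum_simps cong: if_cong) (rule sum.swap)
  moreover have "(\<Sum>i<l. \<Sum>i'<l. \<Sum>j<N. \<Sum>m<N. \<Sum>k<N. \<Sum>n<N.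
            u j * v k * u m * v n * (if i = i' \<and> j = n \<and> k = m then 1 else 0)) =
          real l * (\<Sum>j<N. u j * v j)\<^sup>2"
    by (simp add: sum_simps cong: if_cong)
  moreover have "(\<Sum>i<l. \<Sum>i'<l. \<Sum>j<N. \<Sum>m<N. \<Sum>k<N. \<Sum>n<N.
            u j * v k * u m * v n * (if i = i' \<and> j = k \<and> j = m \<and> j = n then w j else 0)) =
          real l * (\<Sum>j<N. w j * (u j)\<^sup>2 * (v j)\<^sup>2)"
    by (simp add: sum_simps cong: if_cong)
  ultimately show ?thesis
    unfolding distrib_left sum.distrib by (simp only:)
qed

abbreviation sparse_sign_matrix_pmf :: "nat \<Rightarrow> nat \<Rightarrow> (nat \<Rightarrow> real) \<Rightarrow> (nat \<times> nat \<Rightarrow> real) pmf" where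
  "sparse_sign_matrix_pmf l N G \<equiv> Pi_pmf ({..<l} \<times> {..<N}) 0 (\<lambda>(i, j). entry_pmf (G j))"

context
  fixes l N :: nat and G :: "nat \<Rightarrow> real"
  assumes G: "\<And>j. j < N \<Longrightarrow> 0 < G j \<and> G j \<le> 1"
begin

lemma finite_set_sparse_sign_matrix_pmf: "finite (set_pmf (sparse_sign_matrix_pmf l N G))"
  using G by (subst set_Pi_pmf) (auto intro!: finite_PiE_dflt finite_set_entry_pmf)

lemma expectation_sparse_sign_matrix_pair:
  assumes "i < l" "j < N" "k < N"
  shows "measure_pmf.expectation (sparse_sign_matrix_pmf l N G) (\<lambda>\<Phi>. \<Phi> (i, j) * \<Phi> (i, k)) =
           (if j = k then 1 else 0)"
  using assms G
  by (subst expectation_pair_Pi_pmf) (auto simp: finite_set_entry_pmf moments_entry_pmf)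

lemma expectation_sparse_sign_matrix_fourfold:
  assumes "i < l" "i' < l" "j < N" "k < N" "m < N" "n < N"
  shows "measure_pmf.expectation (sparse_sign_matrix_pmf l N G)
             (\<lambda>\<Phi>. \<Phi> (i, j) * \<Phi> (i, k) * \<Phi> (i', m) * \<Phi> (i', n)) =
           (if j = k \<and> m = n then 1 else 0) + (if i = i' \<and> j = m \<and> k = n then 1 else 0)
           + (if i = i' \<and> j = n \<and> k = m then 1 else 0)
           + (if i = i' \<and> j = k \<and> j = m \<and> j = n then 1 / G j - 3 else 0)"
  using assms G
  by (subst expectation_fourfold_Pi_pmf) (auto simp: finite_set_entry_pmf moments_entry_pmf)

lemma expectation_sum_proj_mult_proj:
  assumes "l > 0"
  shows "measure_pmf.expectation (sparse_sign_matrix_pmf l N G)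
             (\<lambda>\<Phi>. \<Sum>i<l. proj l N \<Phi> u i * proj l N \<Phi> v i) = (\<Sum>j<N. u j * v j)"
proof -
  have "measure_pmf.expectation (sparse_sign_matrix_pmf l N G)
             (\<lambda>\<Phi>. \<Sum>i<l. proj l N \<Phi> u i * proj l N \<Phi> v i) =
          1 / real l * (\<Sum>i<l. \<Sum>j<N. \<Sum>k<N. u j * v k * (if j = k then 1 else 0))"
    by (simp add: sum_proj_mult_proj integrable_measure_pmf_finite[OF finite_set_sparse_sign_matrix_pmf]
          expectation_sparse_sign_matrix_pair)
  also have "\<dots> = (\<Sum>j<N. u j * v j)"
    using assms by (simp add: if_distrib[where f="\<lambda>x. _ * x"] cong: if_cong)
  finally show ?thesis .
qed

lemma expectation_sum_proj_mult_proj_squared: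
  assumes "l > 0"
  shows "measure_pmf.expectation (sparse_sign_matrix_pmf l N G)
             (\<lambda>\<Phi>. (\<Sum>i<l. proj l N \<Phi> u i * proj l N \<Phi> v i)\<^sup>2) =
           (\<Sum>j<N. u j * v j)\<^sup>2
           + 1 / real l * ((\<Sum>j<N. (u j)\<^sup>2) * (\<Sum>j<N. (v j)\<^sup>2) + (\<Sum>j<N. u j * v j)\<^sup>2
                           + (\<Sum>j<N. (1 / G j - 3) * (u j)\<^sup>2 * (v j)\<^sup>2))"
proof -
  have "(c * a)\<^sup>2 = c\<^sup>2 * (a * a)" for c a :: real
    by (simp add: power2_eq_square)
  then have square: "(\<Sum>i<l. proj l N \<Phi> u i * proj l N \<Phi> v i)\<^sup>2 =
      (1 / real l)\<^sup>2 * (\<Sum>i<l. \<Sum>i'<l. \<Sum>j<N. \<Sum>m<N. \<Sum>k<N. \<Sum>n<N.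
         u j * v k * u m * v n * (\<Phi> (i, j) * \<Phi> (i, k) * \<Phi> (i', m) * \<Phi> (i', n)))" for \<Phi>
    unfolding sum_proj_mult_proj by (simp only: sum_product) (simp add: mult_ac)
  have "measure_pmf.expectation (sparse_sign_matrix_pmf l N G)
             (\<lambda>\<Phi>. (\<Sum>i<l. proj l N \<Phi> u i * proj l N \<Phi> v i)\<^sup>2) =
      (1 / real l)\<^sup>2 * (\<Sum>i<l. \<Sum>i'<l. \<Sum>j<N. \<Sum>m<N. \<Sum>k<N. \<Sum>n<N. u j * v k * u m * v n *
            ((if j = k \<and> m = n then 1 else 0) + (if i = i' \<and> j = m \<and> k = n then 1 else 0)
             + (if i = i' \<and> j = n \<and> k = m then 1 else 0)
             + (if i = i' \<and> j = k \<and> j = m \<and> j = n then 1 / G j - 3 else 0)))"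
    unfolding square
    by (simp only: integrable_measure_pmf_finite[OF finite_set_sparse_sign_matrix_pmf]
          Bochner_Integration.integral_mult_right_zero Bochner_Integration.integral_sum
          Bochner_Integration.integral_mult_right)
       (simp add: expectation_sparse_sign_matrix_fourfold)
  also have "\<dots> = (1 / real l)\<^sup>2 * ((real l)\<^sup>2 * (\<Sum>j<N. u j * v j)\<^sup>2
         + real l * ((\<Sum>j<N. (u j)\<^sup>2) * (\<Sum>j<N. (v j)\<^sup>2) + (\<Sum>j<N. u j * v j)\<^sup>2
                     + (\<Sum>j<N. (1 / G j - 3) * (u j)\<^sup>2 * (v j)\<^sup>2)))"
    by (simp only: sum_fourfold_weights)
  also have "\<dots> = (\<Sum>j<N. u j * v j)\<^sup>2
           + 1 / real l * ((\<Sum>j<N. (u j)\<^sup>2) * (\<Sum>j<N. (v j)\<^sup>2) + (\<Sum>j<N. u j * v j)\<^sup>2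
                           + (\<Sum>j<N. (1 / G j - 3) * (u j)\<^sup>2 * (v j)\<^sup>2))"
    using assms by (simp add: power2_eq_square distrib_left)
  finally show ?thesis .
qed

end

lemma gprob_bounds:
  assumes "\<And>j. j < N \<Longrightarrow> E j > 0" and "0 < \<kappa>" "\<kappa> \<le> 1" and "j < N"
  shows "0 < gprob N E \<kappa> j \<and> gprob N E \<kappa> j \<le> 1"
proof -
  have "E j \<le> (\<Sum>i<N. E i)"
    using assms(1,4) by (intro member_le_sum) (auto intro: less_imp_le)
  moreover have "\<kappa> * E j \<le> E j" "0 < \<kappa> * E j"
    using assms by (auto intro: mult_left_le_one_le less_imp_le)
  ultimately show ?thesis
    unfolding gprob_def by (simp add: divide_le_eq_1)
qed

theorem proposition1:
  fixes N l :: nat and E u v :: "nat \<Rightarrow> real" and \<kappa> :: real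
  assumes "N > 0" and "l > 0"
    and "\<And>j. j < N \<Longrightarrow> E j > 0"
    and "0 < \<kappa>" and "\<kappa> \<le> 1"
  defines "g \<equiv> gprob N E \<kappa>"
    and "XY \<equiv> (\<lambda>\<Phi>. \<Sum>i<l. proj l N \<Phi> u i * proj l N \<Phi> v i)"
  shows "measure_pmf.expectation (Phi_pmf l N E \<kappa>) XY = (\<Sum>j<N. u j * v j) \<and>
         measure_pmf.variance (Phi_pmf l N E \<kappa>) XY =
           (1 / real l) * ((\<Sum>j<N. u j * v j)\<^sup>2
                           + (\<Sum>j<N. (u j)\<^sup>2) * (\<Sum>j<N. (v j)\<^sup>2)
                           + (\<Sum>j<N. (1 / g j) * (u j)\<^sup>2 * (v j)\<^sup>2)
                           - 3 * (\<Sum>j<N. (u j)\<^sup>2 * (v j)\<^sup>2))"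
proof -
  have g: "\<And>j. j < N \<Longrightarrow> 0 < g j \<and> g j \<le> 1"
    unfolding g_def using assms(3-5) by (rule gprob_bounds)
  have Phi: "Phi_pmf l N E \<kappa> = sparse_sign_matrix_pmf l N g"
    by (simp add: Phi_pmf_def g_def)
  have mean: "measure_pmf.expectation (Phi_pmf l N E \<kappa>) XY = (\<Sum>j<N. u j * v j)"
    unfolding Phi XY_def using g assms(2) by (rule expectation_sum_proj_mult_proj)
  have "measure_pmf.variance (Phi_pmf l N E \<kappa>) XY =
          measure_pmf.expectation (Phi_pmf l N E \<kappa>) (\<lambda>\<Phi>. (XY \<Phi>)\<^sup>2) - (\<Sum>j<N. u j * v j)\<^sup>2"
    unfolding mean[symmetric] Phi
    by (intro measure_pmf.variance_eq integrable_measure_pmf_finite finite_set_sparse_sign_matrix_pmf g)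
  also have "\<dots> = 1 / real l * ((\<Sum>j<N. (u j)\<^sup>2) * (\<Sum>j<N. (v j)\<^sup>2) + (\<Sum>j<N. u j * v j)\<^sup>2
                                 + (\<Sum>j<N. (1 / g j - 3) * (u j)\<^sup>2 * (v j)\<^sup>2))"
    unfolding Phi XY_def using g assms(2) by (simp add: expectation_sum_proj_mult_proj_squared)
  also have "(\<Sum>j<N. (1 / g j - 3) * (u j)\<^sup>2 * (v j)\<^sup>2) =
               (\<Sum>j<N. 1 / g j * (u j)\<^sup>2 * (v j)\<^sup>2) - 3 * (\<Sum>j<N. (u j)\<^sup>2 * (v j)\<^sup>2)"
    by (simp add: left_diff_distrib sum_subtractf sum_distrib_left mult.assoc)
  finally show ?thesis
    using mean by (simp add: algebra_simps)
qed

end
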